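(* Let $n\ge 1$ and let $f$ be the $n$-ary operation on $\mathbb{Z}_8$ given by $f(\mathbf{x})=x_1x_2\cdots x_n\sum_{\alpha\in I_n}b_\alpha\mathbf{x}^\alpha$, where every $b_\alpha\in\mathbb{Z}_8$ is even. Then $f$ preserves the relation $Z$.
   Context: $I_n$ is the set of all $n$-tuples $\alpha\in\{0,1,2\}^n$ with at most two nonzero components, and $\mathbf{x}^\alpha=x_1^{\alpha_1}\cdots x_n^{\alpha_n}$. $P_4$ is the power set of $\{1,2,3,4\}$. For $A\in P_4$, $\mathbf{g}^A\in\mathbb{Z}_8^{P_4}$ is the tuple with $B$-component $1$ if $A\subseteq B$ and $0$ otherwise. Every $\mathbf{u}\in\mathbb{Z}_8^{P_4}$ has a unique expression $\mathbf{u}=\sum_{A\in P_4}a_A\mathbf{g}^A$ with $a_A\in\mathbb{Z}_8$. $Z\subseteq \mathbb{Z}_8^{P_4}$ (a $16$-ary relation) consists of all $\mathbf{u}$ whose coefficients satisfy: (Z1) $a_{\{2\}}\equiv 2a_{\{1\}}\pmod 4$ and $a_{\{4\}}\equiv 2a_{\{3\}}\pmod 4$; (Z2) $a_A\equiv 0\pmod 2$ whenever $|A|\ge 2$; (Z3) $a_A\equiv 0\pmod 4$ whenever $|A|\ge 2$ and $A\cap\{2,4\}\neq\emptyset$; (Z4) $a_A=0$ whenever $\{2,4\}\subseteq A$. An $n$-ary operation $f$ preserves $Z$ if applying $f$ componentwise to any $\mathbf{u}^{(1)},\dots,\mathbf{u}^{(n)}\in Z$ yields an element of $Z$. *)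

theory Defs
  imports "HOL-Library.Numeral_Type"
begin

text \<open>Z_8 is the type 8 (integers modulo 8) from Numeral_Type.
  P_4 is Pow {1,2,3,4}; a tuple in Z_8^{P_4} is a function nat set => 8
  (only its values on P_4 matter).\<close>

definition P4 :: "nat set set" where
  "P4 = Pow {1,2,3,4}"

definition gvec :: "nat set \<Rightarrow> nat set \<Rightarrow> 8" where
  "gvec A B = (if A \<subseteq> B then 1 else 0)"

definition evenZ8 :: "8 \<Rightarrow> bool" where
  "evenZ8 x \<longleftrightarrow> (\<exists>c. x = 2 * c)"

definition div4Z8 :: "8 \<Rightarrow> bool" where
  "div4Z8 x \<longleftrightarrow> (\<exists>c. x = 4 * c)"

definition coeff_ok :: "(nat set \<Rightarrow> 8) \<Rightarrow> bool" where
  "coeff_ok a \<longleftrightarrow>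
     div4Z8 (a {2} - 2 * a {1}) \<and> div4Z8 (a {4} - 2 * a {3}) \<and>
     (\<forall>A\<in>P4. card A \<ge> 2 \<longrightarrow> evenZ8 (a A)) \<and>
     (\<forall>A\<in>P4. card A \<ge> 2 \<and> A \<inter> {2,4} \<noteq> {} \<longrightarrow> div4Z8 (a A)) \<and>
     (\<forall>A\<in>P4. {2,4} \<subseteq> A \<longrightarrow> a A = 0)"

definition relZ :: "(nat set \<Rightarrow> 8) set" where
  "relZ = {u. \<exists>a. (\<forall>B\<in>P4. u B = (\<Sum>A\<in>P4. a A * gvec A B)) \<and> coeff_ok a}"

definition In :: "nat \<Rightarrow> (nat \<Rightarrow> nat) set" where
  "In n = {\<alpha>. (\<forall>i. \<alpha> i \<le> 2) \<and> (\<forall>i. i \<notin> {1..n} \<longrightarrow> \<alpha> i = 0)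
             \<and> card {i\<in>{1..n}. \<alpha> i \<noteq> 0} \<le> 2}"

definition monom :: "nat \<Rightarrow> (nat \<Rightarrow> nat) \<Rightarrow> (nat \<Rightarrow> 8) \<Rightarrow> 8" where
  "monom n \<alpha> x = (\<Prod>i\<in>{1..n}. x i ^ \<alpha> i)"

definition fop :: "nat \<Rightarrow> ((nat \<Rightarrow> nat) \<Rightarrow> 8) \<Rightarrow> (nat \<Rightarrow> 8) \<Rightarrow> 8" where
  "fop n b x = (\<Prod>i\<in>{1..n}. x i) * (\<Sum>\<alpha>\<in>In n. b \<alpha> * monom n \<alpha> x)"

definition preserves_Z :: "nat \<Rightarrow> ((nat \<Rightarrow> 8) \<Rightarrow> 8) \<Rightarrow> bool" where
  "preserves_Z n f \<longleftrightarrow>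
     (\<forall>U :: nat \<Rightarrow> nat set \<Rightarrow> 8. (\<forall>i\<in>{1..n}. U i \<in> relZ) \<longrightarrow>
        (\<lambda>B. f (\<lambda>i. U i B)) \<in> relZ)"

end

theory Submission
  imports Defs
begin

text \<open>Componentwise \<open>gvec A * gvec A' = gvec (A \<union> A')\<close>, so multiplying two vectors
  union-convolves their coefficients. The conditions of \<open>half_coeff_ok\<close> (even on every \<open>A\<close>
  meeting \<open>{2,4}\<close>, divisible by 4 on every \<open>A \<supseteq> {2,4}\<close>) survive union-convolution: a union
  containing \<open>{2,4}\<close> has a part containing \<open>{2,4}\<close> or two parts meeting it. Hence the set
  \<open>halfZ\<close> of vectors with such coefficients is closed under componentwise products and contains
  the constants. Moreover \<open>Z \<subseteq> halfZ\<close>, using (Z1) on the singletons \<open>{2}\<close> and \<open>{4}\<close>, and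
  \<open>2 \<cdot> halfZ \<subseteq> Z\<close>. As \<open>Z\<close> is closed under addition, every polynomial operation with even
  coefficients preserves \<open>Z\<close>.\<close>

lemma Z8_eight_eq_0 [simp]: "(8::8) = 0"
  by simp

lemma Z8_of_int_eq_0_iff: "(of_int z :: 8) = 0 \<longleftrightarrow> 8 dvd z"
  by (simp add: of_int_eq_0_iff_char_dvd)

lemma evenZ8_iff: "evenZ8 x \<longleftrightarrow> 4 * x = 0"
proof
  assume "evenZ8 x"
  then show "4 * x = 0" by (auto simp: evenZ8_def mult.assoc[symmetric])
next
  assume "4 * x = 0"
  then show "evenZ8 x"
  proof (induct x)
    case (of_int z)
    then have "8 dvd 4 * z" by (metis Z8_of_int_eq_0_iff of_int_mult of_int_numeral)
    then have "2 dvd z" by presburger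
    then obtain k where "z = 2 * k" ..
    then show ?case unfolding evenZ8_def by (intro exI[of _ "of_int k"]) simp
  qed
qed

lemma div4Z8_iff: "div4Z8 x \<longleftrightarrow> 2 * x = 0"
proof
  assume "div4Z8 x"
  then show "2 * x = 0" by (auto simp: div4Z8_def mult.assoc[symmetric])
next
  assume "2 * x = 0"
  then show "div4Z8 x"
  proof (induct x)
    case (of_int z)
    then have "8 dvd 2 * z" by (metis Z8_of_int_eq_0_iff of_int_mult of_int_numeral)
    then have "4 dvd z" by presburger
    then obtain k where "z = 4 * k" ..
    then show ?case unfolding div4Z8_def by (intro exI[of _ "of_int k"]) simp
  qed
qed

lemma evenZ8_0 [simp]: "evenZ8 0" and div4Z8_0 [simp]: "div4Z8 0"
  by (simp_all add: evenZ8_iff div4Z8_iff)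

lemma div4Z8_imp_evenZ8: "div4Z8 x \<Longrightarrow> evenZ8 x"
  using mult.assoc[of 2 2 x] by (simp add: div4Z8_iff evenZ8_iff)

lemma evenZ8_if_div4Z8_diff_double:
  assumes "div4Z8 (x - 2 * y)"
  shows "evenZ8 x"
proof -
  have "4 * x = 2 * (2 * (x - 2 * y))"
    by (simp add: algebra_simps)
  with assms show ?thesis
    by (simp add: div4Z8_iff evenZ8_iff)
qed

lemma evenZ8_sum: "(\<And>x. x \<in> S \<Longrightarrow> evenZ8 (f x)) \<Longrightarrow> evenZ8 (sum f S)"
  by (simp add: evenZ8_iff sum_distrib_left)

lemma div4Z8_sum: "(\<And>x. x \<in> S \<Longrightarrow> div4Z8 (f x)) \<Longrightarrow> div4Z8 (sum f S)"
  by (simp add: div4Z8_iff sum_distrib_left)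

lemma evenZ8_mult: "evenZ8 x \<or> evenZ8 y \<Longrightarrow> evenZ8 (x * y)"
  by (elim disjE)
    (simp add: evenZ8_iff mult.assoc[symmetric], simp add: evenZ8_iff mult.left_commute[of 4])

lemma div4Z8_mult: "div4Z8 x \<or> div4Z8 y \<or> evenZ8 x \<and> evenZ8 y \<Longrightarrow> div4Z8 (x * y)"
proof (elim disjE conjE)
  assume "evenZ8 x" "evenZ8 y"
  then obtain p q where "x = 2 * p" "y = 2 * q" unfolding evenZ8_def by blast
  then show "div4Z8 (x * y)" unfolding div4Z8_def by (intro exI[of _ "p * q"]) (simp add: algebra_simps)
qed (simp add: div4Z8_iff mult.assoc[symmetric], simp add: div4Z8_iff mult.left_commute[of 2])

definition gcomb :: "(nat set \<Rightarrow> 8) \<Rightarrow> nat set \<Rightarrow> 8" where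
  "gcomb a B = (\<Sum>A\<in>P4. a A * gvec A B)"

definition union_conv :: "(nat set \<Rightarrow> 8) \<Rightarrow> (nat set \<Rightarrow> 8) \<Rightarrow> nat set \<Rightarrow> 8" where
  "union_conv d e C = (\<Sum>A\<in>P4. \<Sum>A'\<in>P4. if A \<union> A' = C then d A * e A' else 0)"

lemma relZ_iff: "u \<in> relZ \<longleftrightarrow> (\<exists>a. (\<forall>B\<in>P4. u B = gcomb a B) \<and> coeff_ok a)"
  by (simp add: relZ_def gcomb_def)

lemma gcomb_union_conv: "gcomb (union_conv d e) B = gcomb d B * gcomb e B"
proof -
  have "gcomb (union_conv d e) B =
      (\<Sum>C\<in>P4. \<Sum>A\<in>P4. \<Sum>A'\<in>P4. if A \<union> A' = C then d A * e A' * gvec C B else 0)"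
    unfolding gcomb_def union_conv_def sum_distrib_right by (intro sum.cong refl) simp
  also have "\<dots> = (\<Sum>A\<in>P4. \<Sum>C\<in>P4. \<Sum>A'\<in>P4. if A \<union> A' = C then d A * e A' * gvec C B else 0)"
    by (rule sum.swap)
  also have "\<dots> = (\<Sum>A\<in>P4. \<Sum>A'\<in>P4. \<Sum>C\<in>P4. if A \<union> A' = C then d A * e A' * gvec C B else 0)"
    by (intro sum.cong refl sum.swap)
  also have "\<dots> = (\<Sum>A\<in>P4. \<Sum>A'\<in>P4. (d A * gvec A B) * (e A' * gvec A' B))"
    by (intro sum.cong refl) (auto simp: sum.delta' P4_def gvec_def)
  also have "\<dots> = gcomb d B * gcomb e B"
    unfolding gcomb_def by (simp add: sum_product)
  finally show ?thesis .
qed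

definition half_coeff_ok :: "(nat set \<Rightarrow> 8) \<Rightarrow> bool" where
  "half_coeff_ok d \<longleftrightarrow>
     (\<forall>A\<in>P4. A \<inter> {2,4} \<noteq> {} \<longrightarrow> evenZ8 (d A)) \<and> (\<forall>A\<in>P4. {2,4} \<subseteq> A \<longrightarrow> div4Z8 (d A))"

definition halfZ :: "(nat set \<Rightarrow> 8) set" where
  "halfZ = {u. \<exists>d. (\<forall>B\<in>P4. u B = gcomb d B) \<and> half_coeff_ok d}"

lemma
  assumes "half_coeff_ok d" "A \<in> P4"
  shows half_coeff_ok_evenZ8: "A \<inter> {2,4} \<noteq> {} \<Longrightarrow> evenZ8 (d A)"
    and half_coeff_ok_div4Z8: "{2,4} \<subseteq> A \<Longrightarrow> div4Z8 (d A)"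
  using assms unfolding half_coeff_ok_def by meson+

lemma half_coeff_ok_union_conv:
  assumes d: "half_coeff_ok d" and e: "half_coeff_ok e"
  shows "half_coeff_ok (union_conv d e)"
  unfolding half_coeff_ok_def
proof (intro conjI ballI impI)
  fix C assume "C \<in> P4" "C \<inter> {2,4} \<noteq> {}"
  have "evenZ8 (d A * e A')" if "A \<in> P4" "A' \<in> P4" "A \<union> A' = C" for A A'
  proof (rule evenZ8_mult)
    have "A \<inter> {2,4} \<noteq> {} \<or> A' \<inter> {2,4} \<noteq> {}"
      using that \<open>C \<inter> {2,4} \<noteq> {}\<close> by blast
    then show "evenZ8 (d A) \<or> evenZ8 (e A')"
      using half_coeff_ok_evenZ8[OF d] half_coeff_ok_evenZ8[OF e] that by meson
  qed
  then show "evenZ8 (union_conv d e C)"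
    unfolding union_conv_def by (intro evenZ8_sum) simp
next
  fix C assume "C \<in> P4" "{2,4} \<subseteq> C"
  have "div4Z8 (d A * e A')" if "A \<in> P4" "A' \<in> P4" "A \<union> A' = C" for A A'
  proof (rule div4Z8_mult)
    have "{2,4} \<subseteq> A \<or> {2,4} \<subseteq> A' \<or> A \<inter> {2,4} \<noteq> {} \<and> A' \<inter> {2,4} \<noteq> {}"
      using that \<open>{2,4} \<subseteq> C\<close> by auto
    then show "div4Z8 (d A) \<or> div4Z8 (e A') \<or> evenZ8 (d A) \<and> evenZ8 (e A')"
      using half_coeff_ok_div4Z8[OF d] half_coeff_ok_div4Z8[OF e]
        half_coeff_ok_evenZ8[OF d] half_coeff_ok_evenZ8[OF e] that by meson
  qed
  then show "div4Z8 (union_conv d e C)"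
    unfolding union_conv_def by (intro div4Z8_sum) simp
qed

lemma halfZ_mult:
  assumes "u \<in> halfZ" "v \<in> halfZ"
  shows "(\<lambda>B. u B * v B) \<in> halfZ"
proof -
  obtain d e where "\<forall>B\<in>P4. u B = gcomb d B" "\<forall>B\<in>P4. v B = gcomb e B"
    and "half_coeff_ok d" "half_coeff_ok e"
    using assms unfolding halfZ_def by blast
  then show ?thesis
    unfolding halfZ_def
    by (auto simp: gcomb_union_conv intro!: exI[of _ "union_conv d e"] half_coeff_ok_union_conv)
qed

lemma halfZ_const: "(\<lambda>B. c) \<in> halfZ"
proof -
  define d where "d A = (if A = {} then c else 0)" for A :: "nat set"
  have "gcomb d B = c" for B
  proof -
    have "gcomb d B = (\<Sum>A\<in>P4. if A = {} then c else 0)"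
      unfolding gcomb_def d_def by (intro sum.cong) (auto simp: gvec_def)
    then show ?thesis
      by (simp add: sum.delta P4_def)
  qed
  moreover have "half_coeff_ok d"
    unfolding half_coeff_ok_def d_def by auto
  ultimately show ?thesis
    unfolding halfZ_def by (auto intro!: exI[of _ d])
qed

lemma halfZ_prod: "(\<And>i. i \<in> S \<Longrightarrow> F i \<in> halfZ) \<Longrightarrow> (\<lambda>B. \<Prod>i\<in>S. F i B) \<in> halfZ"
  by (induction S rule: infinite_finite_induct) (simp_all add: halfZ_const halfZ_mult)

lemma halfZ_power: "u \<in> halfZ \<Longrightarrow> (\<lambda>B. u B ^ k) \<in> halfZ"
  by (induction k) (simp_all add: halfZ_const halfZ_mult)

lemma coeff_ok_imp_half_coeff_ok:
  assumes "coeff_ok a"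
  shows "half_coeff_ok a"
  unfolding half_coeff_ok_def
proof (intro conjI ballI impI)
  fix A assume A: "A \<in> P4" "A \<inter> {2,4} \<noteq> {}"
  show "evenZ8 (a A)"
  proof (cases "card A \<ge> 2")
    case True
    with A assms show ?thesis
      unfolding coeff_ok_def by (blast intro: div4Z8_imp_evenZ8)
  next
    case False
    have "finite A" "A \<noteq> {}"
      using A by (auto simp: P4_def finite_subset)
    then have "card A > 0"
      by (simp add: card_gt_0_iff)
    with False have "card A = 1"
      by linarith
    then have "A = {2} \<or> A = {4}"
      using A by (auto simp: card_1_singleton_iff)
    moreover have "div4Z8 (a {2} - 2 * a {1})" "div4Z8 (a {4} - 2 * a {3})"
      using assms by (simp_all add: coeff_ok_def)
    ultimately show ?thesis
      by (auto intro: evenZ8_if_div4Z8_diff_double)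
  qed
next
  fix A assume "A \<in> P4" "{2,4} \<subseteq> A"
  with assms show "div4Z8 (a A)"
    unfolding coeff_ok_def by simp
qed

lemma relZ_subset_halfZ: "relZ \<subseteq> halfZ"
proof
  fix u assume "u \<in> relZ"
  then obtain a where "\<forall>B\<in>P4. u B = gcomb a B" "coeff_ok a"
    unfolding relZ_iff by blast
  then show "u \<in> halfZ"
    unfolding halfZ_def using coeff_ok_imp_half_coeff_ok by blast
qed

lemma coeff_ok_double:
  assumes "half_coeff_ok d"
  shows "coeff_ok (\<lambda>A. 2 * d A)"
proof -
  have "{2} \<in> P4" "{4} \<in> P4"
    by (simp_all add: P4_def)
  then have "4 * d {2} = 0" "4 * d {4} = 0"
    using half_coeff_ok_evenZ8[OF assms] by (simp_all add: evenZ8_iff)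
  then show ?thesis
    using assms unfolding coeff_ok_def half_coeff_ok_def
    by (auto simp: div4Z8_iff evenZ8_iff algebra_simps)
qed

lemma double_mem_relZ:
  assumes "u \<in> halfZ"
  shows "(\<lambda>B. 2 * u B) \<in> relZ"
proof -
  obtain d where "\<forall>B\<in>P4. u B = gcomb d B" "half_coeff_ok d"
    using assms unfolding halfZ_def by blast
  then show ?thesis
    unfolding relZ_iff gcomb_def
    by (auto simp: sum_distrib_left mult.assoc intro!: exI[of _ "\<lambda>A. 2 * d A"] coeff_ok_double)
qed

lemma coeff_ok_add: "coeff_ok a \<Longrightarrow> coeff_ok c \<Longrightarrow> coeff_ok (\<lambda>A. a A + c A)"
  unfolding coeff_ok_def by (simp add: div4Z8_iff evenZ8_iff algebra_simps)

lemma relZ_zero: "(\<lambda>B. 0) \<in> relZ"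
  unfolding relZ_def coeff_ok_def by (auto intro!: exI[of _ "\<lambda>_. 0"])

lemma relZ_add:
  assumes "u \<in> relZ" "v \<in> relZ"
  shows "(\<lambda>B. u B + v B) \<in> relZ"
proof -
  obtain a c where "\<forall>B\<in>P4. u B = gcomb a B" "\<forall>B\<in>P4. v B = gcomb c B"
    and "coeff_ok a" "coeff_ok c"
    using assms unfolding relZ_iff by blast
  then show ?thesis
    unfolding relZ_iff gcomb_def
    by (auto simp: algebra_simps sum.distrib intro!: exI[of _ "\<lambda>A. a A + c A"] coeff_ok_add)
qed

lemma relZ_sum: "(\<And>i. i \<in> S \<Longrightarrow> F i \<in> relZ) \<Longrightarrow> (\<lambda>B. \<Sum>i\<in>S. F i B) \<in> relZ"
  by (induction S rule: infinite_finite_induct) (simp_all add: relZ_zero relZ_add)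

theorem lemma3p6:
  fixes n :: nat and b :: "(nat \<Rightarrow> nat) \<Rightarrow> 8"
  assumes "n \<ge> 1"
    and "\<forall>\<alpha>\<in>In n. evenZ8 (b \<alpha>)"
  shows "preserves_Z n (fop n b)"
  unfolding preserves_Z_def
proof (intro allI impI)
  fix U :: "nat \<Rightarrow> nat set \<Rightarrow> 8"
  assume "\<forall>i\<in>{1..n}. U i \<in> relZ"
  then have U_half: "U i \<in> halfZ" if "i \<in> {1..n}" for i
    using that relZ_subset_halfZ by auto
  let ?term = "\<lambda>\<alpha> B. b \<alpha> * ((\<Prod>i\<in>{1..n}. U i B) * monom n \<alpha> (\<lambda>i. U i B))"
  have "?term \<alpha> \<in> relZ" if \<alpha>: "\<alpha> \<in> In n" for \<alpha>
  proof -
    obtain c where "b \<alpha> = 2 * c"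
      using assms(2) \<alpha> unfolding evenZ8_def by blast
    moreover have "(\<lambda>B. c * ((\<Prod>i\<in>{1..n}. U i B) * monom n \<alpha> (\<lambda>i. U i B))) \<in> halfZ"
      unfolding monom_def by (intro halfZ_mult halfZ_const halfZ_prod halfZ_power U_half)
    ultimately show ?thesis
      using double_mem_relZ by (simp add: mult.assoc)
  qed
  then have "(\<lambda>B. \<Sum>\<alpha>\<in>In n. ?term \<alpha> B) \<in> relZ"
    by (rule relZ_sum)
  moreover have "fop n b (\<lambda>i. U i B) = (\<Sum>\<alpha>\<in>In n. ?term \<alpha> B)" for B
    unfolding fop_def by (simp add: sum_distrib_left algebra_simps)
  ultimately show "(\<lambda>B. fop n b (\<lambda>i. U i B)) \<in> relZ"
    by simp
qed

end
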